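(* Let $H$ be a separable complex Hilbert space and $T$ a power-bounded recurrent bounded operator on $H$. Then $T$ is hyper-recurrent and $\mathrm{Hr}(T)$ is dense in $H$.
   Context: $T$ is power-bounded if $\sup_n\|T^n\|<\infty$. $x$ is recurrent if $T^{\omega_n}x\to x$ for some strictly increasing sequence $(\omega_n)$ of positive integers; $\mathrm{Rec}(T)$ is the set of recurrent vectors and $T$ is recurrent if $\mathrm{Rec}(T)$ is dense. $\mathfrak{C}$ is the set of strictly increasing sequences $\omega$ with $T^{\omega_n}x\to x$ for some $x\ne0$; $\mathfrak{L}(\omega)=\{x:T^{\omega_n}x\to x\}$. $\mathrm{Hr}(T)$ is the set of $x\in\mathrm{Rec}(T)$ such that $\mathfrak{L}(\omega)$ is dense for every $\omega\in\mathfrak{C}$ with $x\in\mathfrak{L}(\omega)$; a recurrent $T$ is hyper-recurrent if $\mathrm{Hr}(T)\ne\emptyset$. *)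

theory Defs
  imports "HOL-Analysis.Analysis"
begin

text \<open>A complex Hilbert space: a Banach space (over the reals, via the type class)
  equipped with a complex scalar multiplication sc extending the real one and a
  complex inner product ip inducing the norm.\<close>

definition complex_hilbert :: "(complex \<Rightarrow> 'a::banach \<Rightarrow> 'a) \<Rightarrow> ('a \<Rightarrow> 'a \<Rightarrow> complex) \<Rightarrow> bool" where
  "complex_hilbert sc ip \<longleftrightarrow>
     (\<forall>r x. sc (complex_of_real r) x = r *\<^sub>R x) \<and>
     (\<forall>a b x. sc (a * b) x = sc a (sc b x)) \<and>
     (\<forall>a b x. sc (a + b) x = sc a x + sc b x) \<and>
     (\<forall>a x y. sc a (x + y) = sc a x + sc a y) \<and>
     (\<forall>x y z. ip (x + y) z = ip x z + ip y z) \<and>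
     (\<forall>a x y. ip (sc a x) y = a * ip x y) \<and>
     (\<forall>x y. ip y x = cnj (ip x y)) \<and>
     (\<forall>x. ip x x \<in> \<real> \<and> Re (ip x x) \<ge> 0) \<and>
     (\<forall>x. ip x x = 0 \<longrightarrow> x = 0) \<and>
     (\<forall>x. norm x = sqrt (Re (ip x x)))"

definition separable_type :: "'a::topological_space itself \<Rightarrow> bool" where
  "separable_type _ \<longleftrightarrow> (\<exists>D::'a set. countable D \<and> closure D = UNIV)"

definition complex_bounded_operator :: "(complex \<Rightarrow> 'a::real_normed_vector \<Rightarrow> 'a) \<Rightarrow> ('a \<Rightarrow> 'a) \<Rightarrow> bool" where
  "complex_bounded_operator sc T \<longleftrightarrow> bounded_linear T \<and> (\<forall>a x. T (sc a x) = sc a (T x))"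

definition power_bounded :: "('a::real_normed_vector \<Rightarrow> 'a) \<Rightarrow> bool" where
  "power_bounded T \<longleftrightarrow> (\<exists>M. \<forall>n. onorm (T ^^ n) \<le> M)"

definition admissible_seq :: "(nat \<Rightarrow> nat) \<Rightarrow> bool" where
  "admissible_seq \<omega> \<longleftrightarrow> strict_mono \<omega> \<and> (\<forall>n. 0 < \<omega> n)"

definition Lset :: "('a::topological_space \<Rightarrow> 'a) \<Rightarrow> (nat \<Rightarrow> nat) \<Rightarrow> 'a set" where
  "Lset T \<omega> = {x. (\<lambda>n. (T ^^ \<omega> n) x) \<longlonglongrightarrow> x}"

definition Rec :: "('a::topological_space \<Rightarrow> 'a) \<Rightarrow> 'a set" where
  "Rec T = {x. \<exists>\<omega>. admissible_seq \<omega> \<and> x \<in> Lset T \<omega>}"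

definition recurrent :: "('a::topological_space \<Rightarrow> 'a) \<Rightarrow> bool" where
  "recurrent T \<longleftrightarrow> closure (Rec T) = UNIV"

definition Cset :: "('a::{topological_space,zero} \<Rightarrow> 'a) \<Rightarrow> (nat \<Rightarrow> nat) set" where
  "Cset T = {\<omega>. admissible_seq \<omega> \<and> (\<exists>x. x \<noteq> 0 \<and> x \<in> Lset T \<omega>)}"

definition Hr :: "('a::{topological_space,zero} \<Rightarrow> 'a) \<Rightarrow> 'a set" where
  "Hr T = {x \<in> Rec T. \<forall>\<omega> \<in> Cset T. x \<in> Lset T \<omega> \<longrightarrow> closure (Lset T \<omega>) = UNIV}"

definition hyper_recurrent :: "('a::{topological_space,zero} \<Rightarrow> 'a) \<Rightarrow> bool" where
  "hyper_recurrent T \<longleftrightarrow> recurrent T \<and> Hr T \<noteq> {}"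

end

theory Submission
  imports Defs
begin

text \<open>
  Power-boundedness makes the set of recurrent vectors closed, so every vector is recurrent.
  Hence the powers of \<open>T\<close> are uniformly bounded below and \<open>T\<close> is invertible. A limit point of
  the Cesaro means of \<open>\<langle>T\<^sup>k x, T\<^sup>k y\<rangle>\<close> is an equivalent inner product for which \<open>T\<close> is
  unitary, so the orthogonal projection onto a closed subspace invariant under \<open>T\<close> and \<open>T\<^sup>-\<^sup>1\<close>
  commutes with \<open>T\<close> and therefore maps every \<open>\<L>(\<omega>)\<close>, a closed subspace, into itself.

  Fix a dense sequence \<open>(d\<^sub>n)\<close> and a vector \<open>y\<close>. Let \<open>K\<^sub>n\<close> be the smallest closed subspace
  invariant under \<open>T\<close> and \<open>T\<^sup>-\<^sup>1\<close> containing \<open>y, d\<^sub>0, \<dots>, d\<^sub>n\<^sub>-\<^sub>1\<close>, and \<open>w\<^sub>n\<close> the component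
  of \<open>d\<^sub>n\<close> orthogonal to \<open>K\<^sub>n\<close>. For small weights \<open>c\<^sub>n > 0\<close> the vector \<open>x = y + \<Sum> c\<^sub>n w\<^sub>n\<close> is
  close to \<open>y\<close>, and projecting \<open>x\<close> onto the \<open>K\<^sub>n\<close> recovers \<open>y\<close> and each \<open>w\<^sub>n\<close>. So every
  \<open>\<L>(\<omega>)\<close> containing \<open>x\<close> contains all \<open>d\<^sub>n\<close> and is the whole space; such \<open>x\<close> lie in \<open>Hr(T)\<close>.
\<close>

section \<open>Semi-inner products\<close>

lemma quadratic_nonneg_imp_linear_coeff_zero:
  fixes a b :: real
  assumes nonneg: "\<And>t. 0 \<le> a * t + b * t\<^sup>2"
  shows "a = 0"
proof -
  have "\<bar>a\<bar> \<le> 0 + e" if "e > 0" for e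
  proof -
    have "\<bar>a\<bar> \<le> b" using nonneg[of 1] nonneg[of "-1"] by simp
    define s where "s = e / (b + 1)"
    have s: "s > 0" using \<open>\<bar>a\<bar> \<le> b\<close> \<open>e > 0\<close> by (simp add: s_def)
    have "\<bar>a\<bar> * s \<le> b * s\<^sup>2"
      using nonneg[of s] nonneg[of "-s"] by (cases "a \<ge> 0") auto
    then have "\<bar>a\<bar> \<le> b * s" using s by (simp add: power2_eq_square)
    also have "\<dots> \<le> e" using s \<open>\<bar>a\<bar> \<le> b\<close> \<open>e > 0\<close> by (simp add: s_def field_simps)
    finally show ?thesis by simp
  qed
  then show ?thesis using field_le_epsilon[of "\<bar>a\<bar>" 0] by simp
qed

locale semi_inner_form =
  fixes B :: "'a::real_vector \<Rightarrow> 'a \<Rightarrow> real"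
  assumes add_left: "B (x + y) z = B x z + B y z"
    and scaleR_left: "B (r *\<^sub>R x) y = r * B x y"
    and commute: "B x y = B y x"
    and nonneg: "0 \<le> B x x"
begin

lemma bilinear: "bilinear B"
  unfolding bilinear_def
proof (intro allI conjI)
  show "linear (\<lambda>x. B x y)" for y by (rule linearI) (simp_all add: add_left scaleR_left)
  show "linear (\<lambda>y. B x y)" for x
    by (rule linearI) (simp_all only: commute[of x] add_left scaleR_left real_scaleR_def)
qed

lemmas add_right = bilinear_radd[OF bilinear] and diff_left = bilinear_lsub[OF bilinear]
  and diff_right = bilinear_rsub[OF bilinear]
  and zero_left = bilinear_lzero[OF bilinear]

lemma scaleR_right: "B x (r *\<^sub>R y) = r * B x y"
  using bilinear_rmul[OF bilinear] by simp

lemma expand_add_scaleR: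
  "B (x + t *\<^sub>R y) (x + t *\<^sub>R y) = B x x + 2 * t * B x y + t\<^sup>2 * B y y"
  by (simp add: add_left add_right scaleR_left scaleR_right commute[of y x]
      power2_eq_square algebra_simps)

lemma parallelogram: "B (u - v) (u - v) + B (u + v) (u + v) = 2 * B u u + 2 * B v v"
  by (simp add: add_left add_right diff_left diff_right commute[of v u] algebra_simps)

lemma Cauchy_Schwarz: "(B x y)\<^sup>2 \<le> B x x * B y y"
proof (cases "B y y = 0")
  case True
  have "B x y = 0"
  proof (rule ccontr)
    assume nz: "B x y \<noteq> 0"
    define t where "t = - (B x x + 1) / (2 * B x y)"
    have "0 \<le> B (x + t *\<^sub>R y) (x + t *\<^sub>R y)" by (rule nonneg)
    also have "\<dots> = B x x + 2 * t * B x y" using True by (simp add: expand_add_scaleR)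
    also have "2 * t * B x y = - (B x x + 1)" using nz by (simp add: t_def)
    finally show False by simp
  qed
  then show ?thesis using True by simp
next
  case False
  then have pos: "B y y > 0" using nonneg[of y] by simp
  define t where "t = - B x y / B y y"
  have "0 \<le> B (x + t *\<^sub>R y) (x + t *\<^sub>R y)" by (rule nonneg)
  also have "\<dots> = B x x - (B x y)\<^sup>2 / B y y"
    unfolding expand_add_scaleR using pos by (simp add: t_def power2_eq_square field_simps)
  finally show ?thesis using pos by (simp add: field_simps)
qed

definition qnorm :: "'a \<Rightarrow> real" where
  "qnorm x = sqrt (B x x)"

lemma qnorm_nonneg: "0 \<le> qnorm x"
  using nonneg by (simp add: qnorm_def)

lemma power2_qnorm [simp]: "(qnorm x)\<^sup>2 = B x x"
  using nonneg[of x] by (simp add: qnorm_def)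

lemma abs_le_qnorm_mult: "\<bar>B x y\<bar> \<le> qnorm x * qnorm y"
proof -
  have "\<bar>B x y\<bar> = sqrt ((B x y)\<^sup>2)" by simp
  also have "\<dots> \<le> sqrt (B x x * B y y)" using Cauchy_Schwarz by (rule real_sqrt_le_mono)
  finally show ?thesis by (simp add: qnorm_def real_sqrt_mult)
qed

lemma qnorm_triangle: "qnorm (x + y) \<le> qnorm x + qnorm y"
proof -
  have "(qnorm (x + y))\<^sup>2 = (qnorm x)\<^sup>2 + 2 * B x y + (qnorm y)\<^sup>2"
    using expand_add_scaleR[of x 1 y] by simp
  also have "\<dots> \<le> (qnorm x + qnorm y)\<^sup>2"
    using abs_le_qnorm_mult[of x y] by (simp add: power2_eq_square algebra_simps)
  finally show ?thesis by (rule power2_le_imp_le) (simp add: qnorm_nonneg)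
qed

lemma qnorm_minus_commute: "qnorm (x - y) = qnorm (y - x)"
  by (simp add: qnorm_def diff_left diff_right algebra_simps)

lemma abs_qnorm_diff_le: "\<bar>qnorm x - qnorm y\<bar> \<le> qnorm (x - y)"
  using qnorm_triangle[of "x - y" y] qnorm_triangle[of "y - x" x] qnorm_minus_commute[of x y]
  by simp

lemma orthogonal_if_minimal:
  assumes "\<And>t. B w w \<le> B (w + t *\<^sub>R k) (w + t *\<^sub>R k)"
  shows "B w k = 0"
proof -
  have "0 \<le> (2 * B w k) * t + B k k * t\<^sup>2" for t
    using assms[of t] by (simp add: expand_add_scaleR algebra_simps)
  then have "2 * B w k = 0" by (rule quadratic_nonneg_imp_linear_coeff_zero)
  then show ?thesis by simp
qed

lemma parallelogram_near_minimizers: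
  assumes "subspace K" "a \<in> K" "b \<in> K" and lower: "\<And>k. k \<in> K \<Longrightarrow> \<delta> \<le> B (z - k) (z - k)"
  shows "B (a - b) (a - b) \<le> 2 * (B (z - a) (z - a) - \<delta>) + 2 * (B (z - b) (z - b) - \<delta>)"
proof -
  have "(1/2) *\<^sub>R (a + b) \<in> K" using assms(1-3) by (intro subspace_scale subspace_add)
  then have "4 * \<delta> \<le> B (2 *\<^sub>R (z - (1/2) *\<^sub>R (a + b))) (2 *\<^sub>R (z - (1/2) *\<^sub>R (a + b)))"
    using lower by (simp add: scaleR_left scaleR_right)
  also have "2 *\<^sub>R (z - (1/2) *\<^sub>R (a + b)) = (z - b) + (z - a)"
    by (simp add: algebra_simps scaleR_2)
  finally show ?thesis using parallelogram[of "z - b" "z - a"] by simp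
qed

end

section \<open>Cluster points in the topology of pointwise convergence\<close>

lemma bounded_sequence_has_pointwise_cluster_point:
  fixes F :: "nat \<Rightarrow> 'i \<Rightarrow> real"
  assumes bounded: "\<And>n i. \<bar>F n i\<bar> \<le> b i"
  obtains L where "\<And>N. L \<in> powertop_real UNIV closure_of (F ` {N..})"
proof -
  let ?X = "powertop_real (UNIV :: 'i set)"
  define S where "S = PiE UNIV (\<lambda>i. {-b i..b i})"
  have "compactin ?X S"
    unfolding S_def by (subst compactin_PiE) auto
  then have fip: "S \<inter> \<Inter>\<U> \<noteq> {}"
    if "\<forall>C\<in>\<U>. closedin ?X C" "\<forall>\<F>. finite \<F> \<and> \<F> \<subseteq> \<U> \<longrightarrow> S \<inter> \<Inter>\<F> \<noteq> {}" for \<U>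
    using that unfolding compactin_fip by blast
  define tails where "tails = range (\<lambda>N. ?X closure_of (F ` {N..}))"
  have "S \<inter> \<Inter>tails \<noteq> {}"
  proof (rule fip)
    show "\<forall>C\<in>tails. closedin ?X C" by (auto simp: tails_def)
    show "\<forall>\<F>. finite \<F> \<and> \<F> \<subseteq> tails \<longrightarrow> S \<inter> \<Inter>\<F> \<noteq> {}"
    proof (intro allI impI)
      fix \<F> assume "finite \<F> \<and> \<F> \<subseteq> tails"
      then obtain A where A: "finite A" "\<F> = (\<lambda>N. ?X closure_of (F ` {N..})) ` A"
        unfolding tails_def by (meson finite_subset_image)
      define m where "m = Max (insert 0 A)"
      have "F m \<in> S" using bounded by (auto simp: S_def abs_le_iff minus_le_iff)
      moreover have "F m \<in> ?X closure_of (F ` {N..})" if "N \<in> A" for N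
      proof -
        have "F m \<in> F ` {N..}" using A(1) that by (auto simp: m_def)
        then show ?thesis using closure_of_subset[of "F ` {N..}" ?X] by auto
      qed
      ultimately show "S \<inter> \<Inter>\<F> \<noteq> {}" using A(2) by blast
    qed
  qed
  then show ?thesis using that by (auto simp: tails_def)
qed

lemma pointwise_cluster_point_le:
  fixes F :: "nat \<Rightarrow> 'i \<Rightarrow> real"
  assumes cluster: "\<And>N. L \<in> powertop_real UNIV closure_of (F ` {N..})"
    and cont: "continuous_map (powertop_real UNIV) euclideanreal \<phi>"
    and le: "\<And>n. n \<ge> N \<Longrightarrow> \<phi> (F n) \<le> c"
  shows "\<phi> L \<le> c"
proof -
  let ?C = "{f \<in> topspace (powertop_real UNIV). \<phi> f \<in> {..c}}"
  have "F ` {N..} \<subseteq> ?C" using le by (auto simp: PiE_UNIV_domain)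
  moreover have "closedin (powertop_real UNIV) ?C"
    using cont by (rule closedin_continuous_map_preimage) simp
  ultimately have "powertop_real UNIV closure_of (F ` {N..}) \<subseteq> ?C"
    by (rule closure_of_minimal)
  then show ?thesis using cluster[of N] by auto
qed

lemma continuous_map_powertop_real_eval [continuous_intros]:
  "continuous_map (powertop_real UNIV) euclideanreal (\<lambda>f. f i)"
  by (rule continuous_map_product_projection) simp

section \<open>Recurrence of power-bounded operators\<close>

lemma convergent_subsequence_if_frequently_near:
  fixes f :: "nat \<Rightarrow> 'a::metric_space"
  assumes near: "\<And>\<epsilon> N. \<epsilon> > 0 \<Longrightarrow> \<exists>n\<ge>N. dist (f n) l < \<epsilon>"
  obtains r where "strict_mono r" "(f \<circ> r) \<longlonglongrightarrow> l"
proof -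
  have "\<exists>r. \<forall>k. dist (f (r k)) l < inverse (real (Suc k)) \<and> r k < r (Suc k)"
  proof (rule dependent_nat_choice)
    show "\<exists>n. dist (f n) l < inverse (real (Suc 0))" using near[of 1 0] by auto
    show "\<exists>m. dist (f m) l < inverse (real (Suc (Suc k))) \<and> n < m" for n k
      using near[of "inverse (real (Suc (Suc k)))" "Suc n"] by auto
  qed
  then obtain r where r: "\<And>k. dist (f (r k)) l < inverse (real (Suc k))" "strict_mono r"
    by (auto simp: strict_mono_Suc_iff)
  have "(f \<circ> r) \<longlonglongrightarrow> l"
    using r(1) by (intro metric_tendsto_imp_tendsto[OF LIMSEQ_inverse_real_of_nat]
        always_eventually allI) (simp add: less_imp_le)
  with r(2) show ?thesis by (rule that)
qed

lemma Rec_iff_frequently_near: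
  fixes T :: "'a::metric_space \<Rightarrow> 'a"
  shows "x \<in> Rec T \<longleftrightarrow> (\<forall>\<epsilon>>0. \<forall>N. \<exists>n\<ge>N. dist ((T ^^ n) x) x < \<epsilon>)"
proof
  assume "x \<in> Rec T"
  then obtain \<omega> where \<omega>: "strict_mono \<omega>" "(\<lambda>k. (T ^^ \<omega> k) x) \<longlonglongrightarrow> x"
    by (auto simp: Rec_def Lset_def admissible_seq_def)
  show "\<forall>\<epsilon>>0. \<forall>N. \<exists>n\<ge>N. dist ((T ^^ n) x) x < \<epsilon>"
  proof (intro allI impI)
    fix \<epsilon> :: real and N assume "\<epsilon> > 0"
    then obtain K where K: "\<And>k. k \<ge> K \<Longrightarrow> dist ((T ^^ \<omega> k) x) x < \<epsilon>"
      using \<omega>(2) unfolding lim_sequentially by blast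
    have "N \<le> \<omega> (max K N)"
      using strict_mono_imp_increasing[OF \<omega>(1)] by (meson le_trans max.cobounded2)
    then show "\<exists>n\<ge>N. dist ((T ^^ n) x) x < \<epsilon>" using K[of "max K N"] by auto
  qed
next
  assume near: "\<forall>\<epsilon>>0. \<forall>N. \<exists>n\<ge>N. dist ((T ^^ n) x) x < \<epsilon>"
  have "\<exists>n\<ge>N. dist ((T ^^ Suc n) x) x < \<epsilon>" if "\<epsilon> > 0" for \<epsilon> N
  proof -
    obtain m where "m \<ge> Suc N" "dist ((T ^^ m) x) x < \<epsilon>" using near \<open>\<epsilon> > 0\<close> by blast
    then show ?thesis by (intro exI[of _ "m - 1"]) auto
  qed
  then obtain r where "strict_mono r" "((\<lambda>n. (T ^^ Suc n) x) \<circ> r) \<longlonglongrightarrow> x"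
    by (rule convergent_subsequence_if_frequently_near)
  then have "admissible_seq (Suc \<circ> r)" "x \<in> Lset T (Suc \<circ> r)"
    by (auto simp: admissible_seq_def Lset_def strict_mono_def comp_def)
  then show "x \<in> Rec T" by (auto simp: Rec_def)
qed

lemma Lset_closed_under_commuting:
  fixes T A :: "'a::real_normed_vector \<Rightarrow> 'a"
  assumes A: "bounded_linear A" and commute: "\<And>x. A (T x) = T (A x)"
    and x: "x \<in> Lset T \<omega>"
  shows "A x \<in> Lset T \<omega>"
proof -
  have power_commute: "A ((T ^^ n) x) = (T ^^ n) (A x)" for n
    by (induction n) (simp_all add: commute)
  have "(\<lambda>n. A ((T ^^ \<omega> n) x)) \<longlonglongrightarrow> A x"
    using x unfolding Lset_def by (auto intro: bounded_linear.tendsto[OF A])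
  then show ?thesis by (simp add: Lset_def power_commute)
qed

locale power_bounded_recurrent =
  fixes T :: "'a::banach \<Rightarrow> 'a" and M :: real
  assumes bounded_linear: "bounded_linear T"
    and one_le_M: "1 \<le> M"
    and norm_power_le: "norm ((T ^^ n) x) \<le> M * norm x"
    and recurrent: "recurrent T"
begin

sublocale bounded_linear T by (rule bounded_linear)

lemma bounded_linear_power: "bounded_linear (T ^^ n)"
  by (induction n) (simp_all add: bounded_linear_ident[unfolded id_def]
      bounded_linear_compose[OF bounded_linear])

lemma norm_power_diff_le:
  "norm ((T ^^ n) x - x) \<le> (M + 1) * norm (x - y) + norm ((T ^^ n) y - y)"
proof -
  have eq: "(T ^^ n) x - x = (T ^^ n) (x - y) + ((T ^^ n) y - y) + (y - x)"
    using bounded_linear_power[of n] by (simp add: linear_simps)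
  have "norm ((T ^^ n) x - x) \<le> norm ((T ^^ n) (x - y)) + norm ((T ^^ n) y - y) + norm (y - x)"
    unfolding eq using norm_triangle_ineq[of "(T ^^ n) (x - y) + ((T ^^ n) y - y)" "y - x"]
      norm_triangle_ineq[of "(T ^^ n) (x - y)" "(T ^^ n) y - y"] by linarith
  also have "\<dots> \<le> M * norm (x - y) + norm ((T ^^ n) y - y) + norm (x - y)"
    using norm_power_le by (simp add: norm_minus_commute)
  finally show ?thesis by (simp add: algebra_simps)
qed

lemma Rec_eq_UNIV: "Rec T = UNIV"
proof -
  have "x \<in> Rec T" for x
    unfolding Rec_iff_frequently_near
  proof (intro allI impI)
    fix \<epsilon> :: real and N assume "\<epsilon> > 0"
    then have "\<epsilon> / (2 * (M + 1)) > 0" using one_le_M by simp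
    moreover have "x \<in> closure (Rec T)" using recurrent by (simp add: recurrent_def)
    ultimately obtain y where y: "y \<in> Rec T" "dist y x < \<epsilon> / (2 * (M + 1))"
      unfolding closure_approachable by blast
    obtain n where n: "n \<ge> N" "dist ((T ^^ n) y) y < \<epsilon> / 2"
      using y(1) \<open>\<epsilon> > 0\<close> unfolding Rec_iff_frequently_near by (meson half_gt_zero)
    have "norm ((T ^^ n) x - x) \<le> (M + 1) * dist y x + norm ((T ^^ n) y - y)"
      using norm_power_diff_le[of n x y] by (simp add: dist_norm norm_minus_commute)
    also have "\<dots> < (M + 1) * (\<epsilon> / (2 * (M + 1))) + \<epsilon> / 2"
      using y(2) n(2) one_le_M by (intro add_le_less_mono mult_left_mono) (auto simp: dist_norm)
    also have "\<dots> = \<epsilon>" using one_le_M by (simp add: field_simps)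
    finally show "\<exists>n\<ge>N. dist ((T ^^ n) x) x < \<epsilon>" using n(1) by (auto simp: dist_norm)
  qed
  then show ?thesis by auto
qed

lemma frequently_near: "\<epsilon> > 0 \<Longrightarrow> \<exists>n\<ge>N. dist ((T ^^ n) x) x < \<epsilon>"
  using Rec_eq_UNIV Rec_iff_frequently_near by blast

lemma norm_le_norm_power: "norm x \<le> M * norm ((T ^^ n) x)"
proof (rule field_le_epsilon)
  fix e :: real assume "e > 0"
  then obtain m where m: "m \<ge> n" "dist ((T ^^ m) x) x < e"
    using frequently_near by blast
  have "(T ^^ m) x = (T ^^ (m - n)) ((T ^^ n) x)"
    using m(1) by (simp flip: funpow_add[unfolded comp_def, THEN fun_cong])
  then have "norm ((T ^^ m) x) \<le> M * norm ((T ^^ n) x)" using norm_power_le by simp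
  moreover have "norm x \<le> norm ((T ^^ m) x) + dist ((T ^^ m) x) x"
    using norm_triangle_ineq4[of "(T ^^ m) x" "(T ^^ m) x - x"] by (simp add: dist_norm)
  ultimately show "norm x \<le> M * norm ((T ^^ n) x) + e" using m(2) by linarith
qed

lemma bij: "bij T"
proof (rule bijI)
  show "inj T"
  proof (rule injI)
    fix x y assume "T x = T y"
    then have "norm (x - y) \<le> M * norm (T (x - y))" using norm_le_norm_power[of "x - y" 1] by simp
    with \<open>T x = T y\<close> show "x = y" by (simp add: diff)
  qed
  have "complete (range T)"
    using norm_le_norm_power[of _ 1] one_le_M
    by (intro complete_isometric_image[of "1 / M"]) (auto simp: bounded_linear field_simps
        complete_UNIV)
  then have "closed (range T)" by (rule complete_imp_closed)
  moreover have "x \<in> closure (range T)" for x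
    unfolding closure_approachable
  proof (intro allI impI)
    fix e :: real assume "e > 0"
    then obtain n where "n \<ge> 1" "dist ((T ^^ n) x) x < e"
      using frequently_near by blast
    moreover have "(T ^^ n) x = T ((T ^^ (n - 1)) x)" using \<open>n \<ge> 1\<close>
      by (cases n) auto
    ultimately show "\<exists>y\<in>range T. dist y x < e" by auto
  qed
  ultimately show "surj T" by (auto simp: closure_closed)
qed

lemma T_inv [simp]: "T (inv T x) = x"
  using bij by (simp add: bij_is_surj surj_f_inv_f)

lemma inv_T [simp]: "inv T (T x) = x"
  using bij by (simp add: bij_is_inj)

lemma bounded_linear_inv: "bounded_linear (inv T)"
proof (rule bounded_linear_intro[where K = M])
  show "inv T (x + y) = inv T x + inv T y" for x y
    using inv_T[of "inv T x + inv T y"] by (simp add: add)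
  show "inv T (r *\<^sub>R x) = r *\<^sub>R inv T x" for r x
    using inv_T[of "r *\<^sub>R inv T x"] by (simp add: scaleR)
  show "norm (inv T x) \<le> norm x * M" for x
    using norm_le_norm_power[of "inv T x" 1] by (simp add: mult.commute)
qed

lemma closed_Lset: "closed (Lset T \<omega>)"
  unfolding closed_sequential_limits
proof (intro allI impI)
  fix s l assume s: "(\<forall>n. s n \<in> Lset T \<omega>) \<and> s \<longlonglongrightarrow> l"
  show "l \<in> Lset T \<omega>" unfolding Lset_def mem_Collect_eq
  proof (rule LIMSEQ_I)
    fix r :: real assume "r > 0"
    then have "r / (2 * (M + 1)) > 0" using one_le_M by simp
    then obtain j where "\<forall>n\<ge>j. norm (s n - l) < r / (2 * (M + 1))"
      using s LIMSEQ_D by blast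
    then have j: "norm (l - s j) < r / (2 * (M + 1))" by (simp add: norm_minus_commute)
    have "(\<lambda>n. (T ^^ \<omega> n) (s j)) \<longlonglongrightarrow> s j" using s by (simp add: Lset_def)
    then obtain N where N: "\<And>n. n \<ge> N \<Longrightarrow> norm ((T ^^ \<omega> n) (s j) - s j) < r / 2"
      using LIMSEQ_D[of _ "s j" "r / 2"] \<open>r > 0\<close> by auto
    have "norm ((T ^^ \<omega> n) l - l) < r" if "n \<ge> N" for n
    proof -
      have "norm ((T ^^ \<omega> n) l - l) \<le> (M + 1) * norm (l - s j) + norm ((T ^^ \<omega> n) (s j) - s j)"
        by (rule norm_power_diff_le)
      also have "\<dots> < (M + 1) * (r / (2 * (M + 1))) + r / 2"
        using j N[OF that] one_le_M by (intro add_le_less_mono mult_left_mono) auto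
      also have "\<dots> = r" using one_le_M by (simp add: field_simps)
      finally show ?thesis .
    qed
    then show "\<exists>N. \<forall>n\<ge>N. norm ((T ^^ \<omega> n) l - l) < r" by blast
  qed
qed

lemma subspace_Lset: "subspace (Lset T \<omega>)"
  unfolding subspace_def Lset_def
  using bounded_linear_power by (auto simp: linear_simps intro: tendsto_add tendsto_scaleR)

lemma T_Lset: "x \<in> Lset T \<omega> \<Longrightarrow> T x \<in> Lset T \<omega>"
  by (rule Lset_closed_under_commuting[OF bounded_linear]) simp

lemma inv_Lset: "x \<in> Lset T \<omega> \<Longrightarrow> inv T x \<in> Lset T \<omega>"
  by (rule Lset_closed_under_commuting[OF bounded_linear_inv]) simp

definition invariant_hull :: "'a set \<Rightarrow> 'a set" where
  "invariant_hull F = \<Inter>{S. closed S \<and> subspace S \<and> F \<subseteq> S \<and> T ` S \<subseteq> S \<and> inv T ` S \<subseteq> S}"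

lemma closed_invariant_hull: "closed (invariant_hull F)"
  unfolding invariant_hull_def by (rule closed_Inter) auto

lemma subspace_invariant_hull: "subspace (invariant_hull F)"
  unfolding invariant_hull_def by (rule subspace_Inter) auto

lemma invariant_hull_superset: "F \<subseteq> invariant_hull F"
  and T_image_invariant_hull: "T ` invariant_hull F \<subseteq> invariant_hull F"
  and inv_image_invariant_hull: "inv T ` invariant_hull F \<subseteq> invariant_hull F"
  unfolding invariant_hull_def by blast+

lemma invariant_hull_minimal:
  "closed S \<Longrightarrow> subspace S \<Longrightarrow> F \<subseteq> S \<Longrightarrow> T ` S \<subseteq> S \<Longrightarrow> inv T ` S \<subseteq> S \<Longrightarrow> invariant_hull F \<subseteq> S"
  unfolding invariant_hull_def by blast

lemma invariant_hull_mono: "F \<subseteq> G \<Longrightarrow> invariant_hull F \<subseteq> invariant_hull G"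
  using invariant_hull_superset[of G]
  by (intro invariant_hull_minimal closed_invariant_hull subspace_invariant_hull
      T_image_invariant_hull inv_image_invariant_hull) auto

lemma invariant_hull_subset_Lset: "F \<subseteq> Lset T \<omega> \<Longrightarrow> invariant_hull F \<subseteq> Lset T \<omega>"
  by (rule invariant_hull_minimal) (auto intro: closed_Lset subspace_Lset T_Lset inv_Lset)

end

section \<open>Orthogonal projections for an equivalent inner product\<close>

lemma Cauchy_if_norm_diff_square_le:
  fixes f :: "nat \<Rightarrow> 'a::real_normed_vector"
  assumes le: "\<And>m n. (norm (f m - f n))\<^sup>2 \<le> e m + e n" and e: "e \<longlonglongrightarrow> 0"
  shows "Cauchy f"
proof (rule CauchyI)
  fix \<epsilon> :: real assume "\<epsilon> > 0"
  then obtain N where N: "\<forall>n\<ge>N. \<bar>e n\<bar> < \<epsilon>\<^sup>2 / 2"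
    using LIMSEQ_D[OF e, of "\<epsilon>\<^sup>2 / 2"] by auto
  have "norm (f m - f n) < \<epsilon>" if "m \<ge> N" "n \<ge> N" for m n
  proof -
    have "e m < \<epsilon>\<^sup>2 / 2" "e n < \<epsilon>\<^sup>2 / 2" using N that by (auto simp: abs_less_iff)
    then have "(norm (f m - f n))\<^sup>2 < \<epsilon>\<^sup>2" using le[of m n] by linarith
    then show ?thesis using \<open>\<epsilon> > 0\<close> by (simp add: power_less_imp_less_base)
  qed
  then show "\<exists>N. \<forall>m\<ge>N. \<forall>n\<ge>N. norm (f m - f n) < \<epsilon>" by blast
qed

locale equivalent_inner = semi_inner_form B for B :: "'a::banach \<Rightarrow> 'a \<Rightarrow> real" +
  fixes C :: real
  assumes C_nonneg: "0 \<le> C"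
    and norm_le_qnorm: "norm x \<le> C * qnorm x"
    and qnorm_le_norm: "qnorm x \<le> C * norm x"
begin

lemma self_eq_0_iff: "B x x = 0 \<longleftrightarrow> x = 0"
  using norm_le_qnorm[of x] by (auto simp: qnorm_def zero_left)

lemma power2_norm_le: "(norm x)\<^sup>2 \<le> C\<^sup>2 * B x x"
  using power_mono[OF norm_le_qnorm[of x] norm_ge_zero, of 2] by (simp add: power_mult_distrib)

lemma tendsto_qnorm: "(f \<longlongrightarrow> l) F \<Longrightarrow> ((\<lambda>x. qnorm (f x)) \<longlongrightarrow> qnorm l) F"
proof -
  have "C-lipschitz_on UNIV qnorm"
  proof (rule lipschitz_onI)
    fix x y :: 'a
    have "dist (qnorm x) (qnorm y) \<le> C * norm (x - y)"
      using abs_qnorm_diff_le[of x y] qnorm_le_norm[of "x - y"] by (simp add: dist_real_def)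
    then show "dist (qnorm x) (qnorm y) \<le> C * dist x y" by (simp add: dist_norm)
  qed (rule C_nonneg)
  then have "continuous_on UNIV qnorm" by (rule lipschitz_on_continuous_on)
  then show "(f \<longlongrightarrow> l) F \<Longrightarrow> ((\<lambda>x. qnorm (f x)) \<longlongrightarrow> qnorm l) F"
    by (auto intro: isCont_tendsto_compose simp: continuous_on_eq_continuous_at)
qed

lemma exists_nearest_point:
  assumes K: "closed K" "subspace K"
  obtains p where "p \<in> K" "\<And>k. k \<in> K \<Longrightarrow> B (z - p) (z - p) \<le> B (z - k) (z - k)"
proof -
  define \<delta> where "\<delta> = Inf ((\<lambda>k. B (z - k) (z - k)) ` K)"
  have K0: "0 \<in> K" using K(2) by (rule subspace_0)
  have bdd: "bdd_below ((\<lambda>k. B (z - k) (z - k)) ` K)" by (auto intro: bdd_belowI2 nonneg)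
  have \<delta>_le: "\<delta> \<le> B (z - k) (z - k)" if "k \<in> K" for k
    unfolding \<delta>_def using bdd that by (rule cINF_lower)
  define e :: "nat \<Rightarrow> real" where "e n = inverse (real (Suc n))" for n
  have "\<exists>k. k \<in> K \<and> B (z - k) (z - k) < \<delta> + e n" for n
    using cInf_lessD[of "(\<lambda>k. B (z - k) (z - k)) ` K" "\<delta> + e n"] K0 by (auto simp: \<delta>_def e_def)
  then have "\<exists>k. \<forall>n. k n \<in> K \<and> B (z - k n) (z - k n) < \<delta> + e n" by (intro choice) blast
  then obtain k where k: "\<And>n. k n \<in> K" "\<And>n. B (z - k n) (z - k n) < \<delta> + e n"
    by blast
  have "(norm (k m - k n))\<^sup>2 \<le> 2 * C\<^sup>2 * e m + 2 * C\<^sup>2 * e n" for m n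
  proof -
    have "B (k m - k n) (k m - k n) \<le> 2 * e m + 2 * e n"
      using parallelogram_near_minimizers[OF K(2) k(1) k(1) \<delta>_le, of m n] k(2)[of m] k(2)[of n]
      by simp
    then have "C\<^sup>2 * B (k m - k n) (k m - k n) \<le> C\<^sup>2 * (2 * e m + 2 * e n)"
      by (rule mult_left_mono) simp
    then show ?thesis using power2_norm_le[of "k m - k n"] by (simp add: algebra_simps)
  qed
  moreover have "(\<lambda>n. 2 * C\<^sup>2 * e n) \<longlonglongrightarrow> 0"
    unfolding e_def by (intro tendsto_mult_right_zero LIMSEQ_inverse_real_of_nat)
  ultimately have "Cauchy k" by (rule Cauchy_if_norm_diff_square_le)
  then obtain p where p: "k \<longlonglongrightarrow> p" using Cauchy_convergent convergent_def by blast
  have "p \<in> K" using closed_sequentially[OF K(1) k(1) p] .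
  have "B (z - p) (z - p) \<le> \<delta>"
  proof (rule LIMSEQ_le)
    show "(\<lambda>n. B (z - k n) (z - k n)) \<longlonglongrightarrow> B (z - p) (z - p)"
      using tendsto_power[OF tendsto_qnorm[OF tendsto_diff[OF tendsto_const p]], where n=2] by simp
    show "(\<lambda>n. \<delta> + e n) \<longlonglongrightarrow> \<delta>"
      unfolding e_def by (rule LIMSEQ_inverse_real_of_nat_add)
  qed (use k(2) less_imp_le in auto)
  with \<open>p \<in> K\<close> \<delta>_le show ?thesis by (meson order_trans that)
qed

lemma orthogonal_projection_exists:
  assumes K: "closed K" "subspace K"
  shows "\<exists>p\<in>K. \<forall>k\<in>K. B (z - p) k = 0"
proof -
  obtain p where p: "p \<in> K" "\<And>k. k \<in> K \<Longrightarrow> B (z - p) (z - p) \<le> B (z - k) (z - k)"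
    using exists_nearest_point[OF K, where z = z] by blast
  have "B (z - p) k = 0" if "k \<in> K" for k
  proof (rule orthogonal_if_minimal)
    fix t
    have "p - t *\<^sub>R k \<in> K" using K(2) p(1) that by (intro subspace_diff subspace_scale)
    from p(2)[OF this] show "B (z - p) (z - p) \<le> B (z - p + t *\<^sub>R k) (z - p + t *\<^sub>R k)"
      by (simp add: algebra_simps)
  qed
  with p(1) show ?thesis by blast
qed

lemma orthogonal_projection_unique:
  assumes "subspace K" "p \<in> K" "\<forall>k\<in>K. B (z - p) k = 0" "q \<in> K" "\<forall>k\<in>K. B (z - q) k = 0"
  shows "p = q"
proof -
  have "q - p \<in> K" using assms by (simp add: subspace_diff)
  moreover have "B (q - p) (q - p) = B (z - p) (q - p) - B (z - q) (q - p)"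
    by (simp flip: diff_left)
  ultimately have "B (q - p) (q - p) = 0" using assms(3,5) by simp
  then show ?thesis by (simp add: self_eq_0_iff)
qed

definition proj :: "'a set \<Rightarrow> 'a \<Rightarrow> 'a" where
  "proj K z = (THE p. p \<in> K \<and> (\<forall>k\<in>K. B (z - p) k = 0))"

context
  fixes K :: "'a set"
  assumes closed: "closed K" and subspace: "subspace K"
begin

lemma proj_in: "proj K z \<in> K"
  and proj_orthogonal: "k \<in> K \<Longrightarrow> B (z - proj K z) k = 0"
proof -
  have "\<exists>!p. p \<in> K \<and> (\<forall>k\<in>K. B (z - p) k = 0)"
    using orthogonal_projection_exists[OF closed subspace, of z]
      orthogonal_projection_unique[OF subspace] by blast
  then have "proj K z \<in> K \<and> (\<forall>k\<in>K. B (z - proj K z) k = 0)"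
    unfolding proj_def by (rule theI')
  then show "proj K z \<in> K" "k \<in> K \<Longrightarrow> B (z - proj K z) k = 0" by blast+
qed

lemma proj_eqI: "q \<in> K \<Longrightarrow> (\<And>k. k \<in> K \<Longrightarrow> B (z - q) k = 0) \<Longrightarrow> proj K z = q"
  using orthogonal_projection_unique[OF subspace proj_in] proj_orthogonal by blast

lemma proj_eq_self: "z \<in> K \<Longrightarrow> proj K z = z"
  by (rule proj_eqI) (simp_all add: zero_left)

lemma proj_eq_0: "(\<And>k. k \<in> K \<Longrightarrow> B z k = 0) \<Longrightarrow> proj K z = 0"
  by (rule proj_eqI) (simp_all add: subspace_0[OF subspace])

lemma bounded_linear_proj: "bounded_linear (proj K)"
proof (rule bounded_linear_intro[where K = "C\<^sup>2"])
  show "proj K (x + y) = proj K x + proj K y" for x y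
  proof (rule proj_eqI)
    show "proj K x + proj K y \<in> K" using subspace by (simp add: proj_in subspace_add)
    have eq: "x + y - (proj K x + proj K y) = (x - proj K x) + (y - proj K y)" by simp
    show "B (x + y - (proj K x + proj K y)) k = 0" if "k \<in> K" for k
      unfolding eq add_left using that by (simp add: proj_orthogonal)
  qed
  show "proj K (r *\<^sub>R x) = r *\<^sub>R proj K x" for r x
  proof (rule proj_eqI)
    show "r *\<^sub>R proj K x \<in> K" using subspace by (simp add: proj_in subspace_scale)
    have "r *\<^sub>R x - r *\<^sub>R proj K x = r *\<^sub>R (x - proj K x)" by (simp add: scaleR_diff_right)
    then show "B (r *\<^sub>R x - r *\<^sub>R proj K x) k = 0" if "k \<in> K" for k
      using that by (simp add: scaleR_left proj_orthogonal)
  qed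
  show "norm (proj K x) \<le> norm x * C\<^sup>2" for x
  proof -
    have "B x x = B (proj K x) (proj K x) + B (x - proj K x) (x - proj K x)"
      using expand_add_scaleR[of "proj K x" 1 "x - proj K x"] proj_orthogonal[OF proj_in, of x]
      by (simp add: commute)
    then have "qnorm (proj K x) \<le> qnorm x"
      using nonneg[of "x - proj K x"] by (simp add: qnorm_def)
    then have "norm (proj K x) \<le> C * qnorm x"
      using norm_le_qnorm[of "proj K x"] C_nonneg by (meson mult_left_mono order_trans)
    also have "\<dots> \<le> C * (C * norm x)" using qnorm_le_norm C_nonneg by (rule mult_left_mono)
    finally show ?thesis by (simp add: power2_eq_square algebra_simps)
  qed
qed

lemma proj_commute:
  assumes U: "linear U" "U ` K \<subseteq> K" "V ` K \<subseteq> K" "\<And>k. U (V k) = k"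
    and preserves: "\<And>x y. B (U x) (U y) = B x y"
  shows "proj K (U z) = U (proj K z)"
proof (rule proj_eqI)
  show "U (proj K z) \<in> K" using proj_in U(2) by blast
  show "B (U z - U (proj K z)) k = 0" if "k \<in> K" for k
  proof -
    have "B (U z - U (proj K z)) k = B (U (z - proj K z)) (U (V k))"
      using U(1,4) by (simp add: linear_diff)
    also have "\<dots> = B (z - proj K z) (V k)" by (rule preserves)
    also have "\<dots> = 0" using proj_orthogonal U(3) that by blast
    finally show ?thesis .
  qed
qed

end

lemma proj_suminf_increments:
  assumes K: "\<And>n. closed (K n)" "\<And>n. subspace (K n)" "mono K"
    and w: "\<And>n. w n \<in> K (Suc n)" "\<And>n k. k \<in> K n \<Longrightarrow> B (w n) k = 0"
    and summable: "summable w"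
  shows "proj (K m) (suminf w) = (\<Sum>n<m. w n)"
proof -
  have proj_w: "proj (K m) (w n) = (if n < m then w n else 0)" for n
  proof (cases "n < m")
    case True
    then have "w n \<in> K m" using w(1) monoD[OF K(3), of "Suc n" m] by auto
    then show ?thesis using True proj_eq_self[OF K(1,2)] by simp
  next
    case False
    then have "k \<in> K m \<Longrightarrow> B (w n) k = 0" for k using w(2) monoD[OF K(3), of m n] by auto
    then show ?thesis using False proj_eq_0[OF K(1,2)] by simp
  qed
  have "proj (K m) (suminf w) = (\<Sum>n. proj (K m) (w n))"
    by (rule bounded_linear.suminf[OF bounded_linear_proj[OF K(1,2)] summable])
  also have "\<dots> = (\<Sum>n<m. w n)"
    by (subst suminf_finite[of "{..<m}"]) (simp_all add: proj_w)
  finally show ?thesis .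
qed

end

lemma exists_small_positive_weights:
  fixes w :: "nat \<Rightarrow> 'a::banach"
  assumes "\<epsilon> > 0"
  obtains c where "\<And>n. c n > 0" "summable (\<lambda>n. c n *\<^sub>R w n)" "norm (\<Sum>n. c n *\<^sub>R w n) \<le> \<epsilon>"
proof
  define c where "c n = \<epsilon> / (2 ^ Suc n * (norm (w n) + 1))" for n
  show "c n > 0" for n using assms by (simp add: c_def add_nonneg_pos)
  have bound: "norm (c n *\<^sub>R w n) \<le> \<epsilon> / 2 * (1 / 2) ^ n" for n
  proof -
    have "norm (c n *\<^sub>R w n) = \<epsilon> / 2 ^ Suc n * (norm (w n) / (norm (w n) + 1))"
      using assms by (simp add: c_def)
    also have "\<dots> \<le> \<epsilon> / 2 ^ Suc n"
      using assms by (intro mult_left_le) (simp_all add: divide_le_eq_1 add_nonneg_pos)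
    finally show ?thesis by (simp add: power_divide)
  qed
  have geometric: "summable (\<lambda>n. \<epsilon> / 2 * (1 / 2 :: real) ^ n)"
    by (intro summable_mult summable_geometric) simp
  show "summable (\<lambda>n. c n *\<^sub>R w n)"
    by (rule summable_comparison_test[OF _ geometric]) (use bound in auto)
  have "norm (\<Sum>n. c n *\<^sub>R w n) \<le> (\<Sum>n. \<epsilon> / 2 * (1 / 2 :: real) ^ n)"
    using bound geometric by (rule norm_suminf_le)
  also have "\<dots> = \<epsilon>" by (subst suminf_mult) (simp_all add: suminf_geometric)
  finally show "norm (\<Sum>n. c n *\<^sub>R w n) \<le> \<epsilon>" .
qed

section \<open>An equivalent inner product for which the operator is unitary\<close>

locale hilbert_power_bounded_recurrent = power_bounded_recurrent T M + G: semi_inner_form g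
  for T :: "'a::banach \<Rightarrow> 'a" and M :: real and g :: "'a \<Rightarrow> 'a \<Rightarrow> real" +
  assumes g_self: "g x x = (norm x)\<^sup>2"
begin

lemma abs_g_power_le: "\<bar>g ((T ^^ k) x) ((T ^^ k) y)\<bar> \<le> M\<^sup>2 * norm x * norm y"
proof -
  have "\<bar>g ((T ^^ k) x) ((T ^^ k) y)\<bar> \<le> norm ((T ^^ k) x) * norm ((T ^^ k) y)"
    using G.abs_le_qnorm_mult by (simp add: G.qnorm_def g_self)
  also have "\<dots> \<le> (M * norm x) * (M * norm y)"
    using one_le_M by (intro mult_mono norm_power_le) auto
  finally show ?thesis by (simp add: power2_eq_square algebra_simps)
qed

definition cesaro_mean :: "nat \<Rightarrow> 'a \<times> 'a \<Rightarrow> real" where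
  "cesaro_mean n p = (\<Sum>k\<le>n. g ((T ^^ k) (fst p)) ((T ^^ k) (snd p))) / (real n + 1)"

lemma abs_cesaro_mean_le: "\<bar>cesaro_mean n p\<bar> \<le> M\<^sup>2 * norm (fst p) * norm (snd p)"
proof -
  have "\<bar>\<Sum>k\<le>n. g ((T ^^ k) (fst p)) ((T ^^ k) (snd p))\<bar> \<le> (\<Sum>k\<le>n. M\<^sup>2 * norm (fst p) * norm (snd p))"
    by (rule order_trans[OF sum_abs sum_mono]) (rule abs_g_power_le)
  then show ?thesis by (simp add: cesaro_mean_def abs_divide field_simps)
qed

lemma cesaro_mean_shift:
  "\<bar>cesaro_mean n (T x, T y) - cesaro_mean n (x, y)\<bar> \<le> 2 * M\<^sup>2 * norm x * norm y / (real n + 1)"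
proof -
  define a where "a k = g ((T ^^ k) x) ((T ^^ k) y)" for k
  have "(\<Sum>k\<le>n. g ((T ^^ k) (T x)) ((T ^^ k) (T y))) = (\<Sum>k\<le>n. a (Suc k))"
    by (simp add: a_def funpow_swap1)
  also have "\<dots> = (\<Sum>k\<le>n. a k) + (a (Suc n) - a 0)"
    by (induction n) simp_all
  finally have "(\<Sum>k\<le>n. g ((T ^^ k) (T x)) ((T ^^ k) (T y))) - (\<Sum>k\<le>n. a k) = a (Suc n) - a 0"
    by simp
  then have "cesaro_mean n (T x, T y) - cesaro_mean n (x, y) = (a (Suc n) - a 0) / (real n + 1)"
    by (simp add: cesaro_mean_def a_def diff_divide_distrib[symmetric])
  moreover have "\<bar>a (Suc n) - a 0\<bar> \<le> 2 * M\<^sup>2 * norm x * norm y"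
    using abs_g_power_le[of "Suc n" x y] abs_g_power_le[of 0 x y] unfolding a_def by linarith
  ultimately show ?thesis by (simp add: abs_divide divide_right_mono)
qed

text \<open>A cluster point of the Cesaro means (it exists by Tychonoff's theorem) serves as a
  Banach limit.\<close>

definition cesaro_limit :: "'a \<times> 'a \<Rightarrow> real" where
  "cesaro_limit = (SOME L. \<forall>N. L \<in> powertop_real UNIV closure_of (cesaro_mean ` {N..}))"

definition invariant_inner :: "'a \<Rightarrow> 'a \<Rightarrow> real" where
  "invariant_inner x y = cesaro_limit (x, y)"

lemma cesaro_limit_le:
  assumes "continuous_map (powertop_real UNIV) euclideanreal \<phi>"
    and "\<And>n. n \<ge> N \<Longrightarrow> \<phi> (cesaro_mean n) \<le> c"
  shows "\<phi> cesaro_limit \<le> c"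
proof -
  have "\<exists>L. \<forall>N. L \<in> powertop_real UNIV closure_of (cesaro_mean ` {N..})"
    using bounded_sequence_has_pointwise_cluster_point[of cesaro_mean
        "\<lambda>p. M\<^sup>2 * norm (fst p) * norm (snd p)", OF abs_cesaro_mean_le] by blast
  then have "\<forall>N. cesaro_limit \<in> powertop_real UNIV closure_of (cesaro_mean ` {N..})"
    unfolding cesaro_limit_def by (rule someI_ex)
  then show ?thesis
    using pointwise_cluster_point_le[of cesaro_limit cesaro_mean, OF _ assms] by blast
qed

lemma cesaro_limit_eq_0:
  assumes "\<And>n. f (cesaro_mean n) = 0" "continuous_map (powertop_real UNIV) euclideanreal f"
  shows "f cesaro_limit = 0"
  using cesaro_limit_le[of "\<lambda>h. \<bar>f h\<bar>" 0 0] assms by (simp add: continuous_map_real_abs)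

lemma invariant_inner_self_lower: "(norm x)\<^sup>2 / M\<^sup>2 \<le> invariant_inner x x"
proof -
  have "(norm x)\<^sup>2 / M\<^sup>2 \<le> cesaro_mean n (x, x)" for n
  proof -
    have "(norm x)\<^sup>2 / M\<^sup>2 \<le> g ((T ^^ k) x) ((T ^^ k) x)" for k
    proof -
      have "norm x / M \<le> norm ((T ^^ k) x)"
        using norm_le_norm_power[of x k] one_le_M by (simp add: field_simps)
      then have "(norm x / M)\<^sup>2 \<le> (norm ((T ^^ k) x))\<^sup>2"
        using one_le_M by (intro power_mono) auto
      then show ?thesis by (simp add: g_self power_divide)
    qed
    then have "(\<Sum>k\<le>n. (norm x)\<^sup>2 / M\<^sup>2) \<le> (\<Sum>k\<le>n. g ((T ^^ k) x) ((T ^^ k) x))"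
      by (rule sum_mono)
    then have "(real n + 1) * ((norm x)\<^sup>2 / M\<^sup>2) \<le> (\<Sum>k\<le>n. g ((T ^^ k) x) ((T ^^ k) x))"
      by (simp add: add.commute)
    then show ?thesis by (simp add: cesaro_mean_def pos_le_divide_eq mult.commute)
  qed
  moreover have "continuous_map (powertop_real UNIV) euclideanreal (\<lambda>h. - h (x, x))"
    by (intro continuous_intros)
  ultimately show ?thesis
    using cesaro_limit_le[of "\<lambda>h. - h (x, x)" 0 "- ((norm x)\<^sup>2 / M\<^sup>2)"]
    by (simp add: invariant_inner_def)
qed

lemma invariant_inner_self_upper: "invariant_inner x x \<le> M\<^sup>2 * (norm x)\<^sup>2"
proof -
  have "cesaro_mean n (x, x) \<le> M\<^sup>2 * (norm x)\<^sup>2" for n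
    using abs_le_D1[OF abs_cesaro_mean_le[of n "(x, x)"]] by (simp add: power2_eq_square mult.assoc)
  then show ?thesis
    using cesaro_limit_le[OF continuous_map_powertop_real_eval[of "(x, x)"],
        of 0 "M\<^sup>2 * (norm x)\<^sup>2"]
    by (simp add: invariant_inner_def)
qed

lemma invariant_inner_T: "invariant_inner (T x) (T y) = invariant_inner x y"
proof -
  define c where "c = 2 * M\<^sup>2 * norm x * norm y"
  have "\<bar>invariant_inner (T x) (T y) - invariant_inner x y\<bar> \<le> c * inverse (real (Suc N))" for N
  proof -
    have "\<bar>cesaro_mean n (T x, T y) - cesaro_mean n (x, y)\<bar> \<le> c * inverse (real (Suc N))"
      if "n \<ge> N" for n
    proof -
      have "\<bar>cesaro_mean n (T x, T y) - cesaro_mean n (x, y)\<bar> \<le> c / (real n + 1)"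
        using cesaro_mean_shift[of n x y] by (simp add: c_def)
      also have "\<dots> \<le> c / (real N + 1)"
        using that by (intro divide_left_mono) (auto simp: c_def)
      finally show ?thesis by (simp add: divide_inverse add.commute)
    qed
    moreover have
      "continuous_map (powertop_real UNIV) euclideanreal (\<lambda>h. \<bar>h (T x, T y) - h (x, y)\<bar>)"
      by (intro continuous_intros)
    ultimately show ?thesis
      using cesaro_limit_le[of "\<lambda>h. \<bar>h (T x, T y) - h (x, y)\<bar>" N] by (simp add: invariant_inner_def)
  qed
  moreover have "(\<lambda>N. c * inverse (real (Suc N))) \<longlonglongrightarrow> 0"
    by (intro tendsto_mult_right_zero LIMSEQ_inverse_real_of_nat)
  ultimately have "\<bar>invariant_inner (T x) (T y) - invariant_inner x y\<bar> \<le> 0"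
    by (intro LIMSEQ_le_const) auto
  then show ?thesis by simp
qed

sublocale semi_inner_form invariant_inner
proof
  show "invariant_inner (x + y) z = invariant_inner x z + invariant_inner y z" for x y z
    using cesaro_limit_eq_0[of "\<lambda>h. h (x + y, z) - h (x, z) - h (y, z)"]
    by (simp add: invariant_inner_def cesaro_mean_def bounded_linear_power G.add_left linear_simps
        sum.distrib add_divide_distrib continuous_intros)
  show "invariant_inner (r *\<^sub>R x) y = r * invariant_inner x y" for r x y
    using cesaro_limit_eq_0[of "\<lambda>h. h (r *\<^sub>R x, y) - r * h (x, y)"]
    by (simp add: invariant_inner_def cesaro_mean_def bounded_linear_power G.scaleR_left
        linear_simps sum_distrib_left continuous_intros)
  show "invariant_inner x y = invariant_inner y x" for x y
    using cesaro_limit_eq_0[of "\<lambda>h. h (x, y) - h (y, x)"]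
    by (simp add: invariant_inner_def cesaro_mean_def G.commute continuous_intros)
  show "0 \<le> invariant_inner x x" for x
    by (rule order_trans[OF _ invariant_inner_self_lower]) simp
qed

sublocale equivalent_inner invariant_inner M
proof
  show "0 \<le> M" using one_le_M by simp
  show "norm x \<le> M * qnorm x" for x
  proof (rule power2_le_imp_le)
    have "(norm x)\<^sup>2 \<le> invariant_inner x x * M\<^sup>2"
      using invariant_inner_self_lower[of x] one_le_M by (simp add: pos_divide_le_eq)
    then show "(norm x)\<^sup>2 \<le> (M * qnorm x)\<^sup>2" by (simp add: power_mult_distrib mult.commute)
    show "0 \<le> M * qnorm x" using one_le_M qnorm_nonneg by simp
  qed
  show "qnorm x \<le> M * norm x" for x
  proof (rule power2_le_imp_le)
    show "(qnorm x)\<^sup>2 \<le> (M * norm x)\<^sup>2"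
      using invariant_inner_self_upper[of x] by (simp add: power_mult_distrib)
    show "0 \<le> M * norm x" using one_le_M by simp
  qed
qed

section \<open>Hyper-recurrent vectors\<close>

lemma proj_invariant_hull_T: "proj (invariant_hull F) (T z) = T (proj (invariant_hull F) z)"
  by (rule proj_commute[where V = "inv T"])
    (simp_all add: closed_invariant_hull subspace_invariant_hull
      T_image_invariant_hull inv_image_invariant_hull invariant_inner_T linear)

lemma proj_invariant_hull_Lset: "x \<in> Lset T \<omega> \<Longrightarrow> proj (invariant_hull F) x \<in> Lset T \<omega>"
  by (rule Lset_closed_under_commuting[of "proj (invariant_hull F)" T])
    (simp_all add: bounded_linear_proj closed_invariant_hull subspace_invariant_hull
      proj_invariant_hull_T)

definition chain_hull :: "'a \<Rightarrow> (nat \<Rightarrow> 'a) \<Rightarrow> nat \<Rightarrow> 'a set" where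
  "chain_hull y d n = invariant_hull (insert y (d ` {..<n}))"

definition increment :: "'a \<Rightarrow> (nat \<Rightarrow> 'a) \<Rightarrow> nat \<Rightarrow> 'a" where
  "increment y d n = d n - proj (chain_hull y d n) (d n)"

lemma closed_chain_hull: "closed (chain_hull y d n)"
  and subspace_chain_hull: "subspace (chain_hull y d n)"
  by (simp_all add: chain_hull_def closed_invariant_hull subspace_invariant_hull)

lemma mono_chain_hull: "mono (chain_hull y d)"
  unfolding chain_hull_def by (intro monoI invariant_hull_mono) auto

lemma increment_in_chain_hull: "increment y d n \<in> chain_hull y d (Suc n)"
proof -
  have "d n \<in> chain_hull y d (Suc n)"
    using invariant_hull_superset[of "insert y (d ` {..<Suc n})"] by (auto simp: chain_hull_def)
  moreover have "chain_hull y d n \<subseteq> chain_hull y d (Suc n)" by (rule monoD[OF mono_chain_hull]) simp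
  then have "proj (chain_hull y d n) (d n) \<in> chain_hull y d (Suc n)"
    using proj_in[OF closed_chain_hull subspace_chain_hull] by blast
  ultimately show ?thesis using subspace_chain_hull by (simp add: increment_def subspace_diff)
qed

lemma increment_orthogonal: "k \<in> chain_hull y d n \<Longrightarrow> invariant_inner (increment y d n) k = 0"
  using proj_orthogonal[OF closed_chain_hull subspace_chain_hull] by (simp add: increment_def)

lemma proj_chain_hull_weighted_increments:
  assumes "summable (\<lambda>n. c n *\<^sub>R increment y d n)"
  shows "proj (chain_hull y d m) (y + (\<Sum>n. c n *\<^sub>R increment y d n))
    = y + (\<Sum>n<m. c n *\<^sub>R increment y d n)"
proof -
  have "proj (chain_hull y d m) (\<Sum>n. c n *\<^sub>R increment y d n) = (\<Sum>n<m. c n *\<^sub>R increment y d n)"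
    using assms closed_chain_hull subspace_chain_hull mono_chain_hull increment_in_chain_hull
      increment_orthogonal
    by (intro proj_suminf_increments) (auto simp: subspace_scale scaleR_left)
  moreover have "proj (chain_hull y d m) y = y"
    using invariant_hull_superset[of "insert y (d ` {..<m})"]
    by (intro proj_eq_self closed_chain_hull subspace_chain_hull) (auto simp: chain_hull_def)
  ultimately show ?thesis
    using bounded_linear_proj[OF closed_chain_hull subspace_chain_hull, of y d m]
    by (simp add: linear_simps)
qed

lemma Lset_eq_UNIV_if_increments:
  fixes d :: "nat \<Rightarrow> 'a"
  assumes d: "closure (range d) = UNIV" and y: "y \<in> Lset T \<omega>"
    and increments: "\<And>n. increment y d n \<in> Lset T \<omega>"
  shows "Lset T \<omega> = UNIV"
proof -
  have "d ` {..<n} \<subseteq> Lset T \<omega>" for n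
  proof (induction n)
    case (Suc n)
    then have "chain_hull y d n \<subseteq> Lset T \<omega>"
      using y unfolding chain_hull_def by (intro invariant_hull_subset_Lset) auto
    then have "proj (chain_hull y d n) (d n) \<in> Lset T \<omega>"
      using proj_in[OF closed_chain_hull subspace_chain_hull] by blast
    from subspace_add[OF subspace_Lset this increments[of n]] have "d n \<in> Lset T \<omega>"
      by (simp add: increment_def)
    then show ?case using Suc by (auto simp: lessThan_Suc)
  qed simp
  then have "range d \<subseteq> Lset T \<omega>" by blast
  then have "closure (range d) \<subseteq> Lset T \<omega>" using closed_Lset by (rule closure_minimal)
  then show ?thesis using d by auto
qed

lemma Lset_eq_UNIV_if_weighted_increments:
  fixes d :: "nat \<Rightarrow> 'a"
  assumes d: "closure (range d) = UNIV"
    and c: "\<And>n. c n \<noteq> 0" "summable (\<lambda>n. c n *\<^sub>R increment y d n)"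
    and x: "y + (\<Sum>n. c n *\<^sub>R increment y d n) \<in> Lset T \<omega>"
  shows "Lset T \<omega> = UNIV"
proof (rule Lset_eq_UNIV_if_increments[OF d])
  have proj_Lset: "y + (\<Sum>n<m. c n *\<^sub>R increment y d n) \<in> Lset T \<omega>" for m
    using proj_invariant_hull_Lset[OF x, of "insert y (d ` {..<m})"]
    by (simp add: proj_chain_hull_weighted_increments[OF c(2)] flip: chain_hull_def)
  show "y \<in> Lset T \<omega>" using proj_Lset[of 0] by simp
  fix n
  have "c n *\<^sub>R increment y d n \<in> Lset T \<omega>"
    using subspace_diff[OF subspace_Lset proj_Lset[of "Suc n"] proj_Lset[of n]] by simp
  from subspace_scale[OF subspace_Lset this, of "1 / c n"]
  show "increment y d n \<in> Lset T \<omega>" using c(1)[of n] by simp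
qed

lemma exists_near_Lset_universal_vector:
  fixes d :: "nat \<Rightarrow> 'a"
  assumes d: "closure (range d) = UNIV" and "\<epsilon> > 0"
  obtains x where "dist x y \<le> \<epsilon>" "\<And>\<omega>. x \<in> Lset T \<omega> \<Longrightarrow> Lset T \<omega> = UNIV"
proof -
  obtain c where c: "\<And>n. c n > 0" "summable (\<lambda>n. c n *\<^sub>R increment y d n)"
    "norm (\<Sum>n. c n *\<^sub>R increment y d n) \<le> \<epsilon>"
    using exists_small_positive_weights \<open>\<epsilon> > 0\<close> by blast
  have "c n \<noteq> 0" for n using c(1)[of n] by simp
  show ?thesis
  proof
    show "dist (y + (\<Sum>n. c n *\<^sub>R increment y d n)) y \<le> \<epsilon>" using c(3) by (simp add: dist_norm)
    show "Lset T \<omega> = UNIV" if "y + (\<Sum>n. c n *\<^sub>R increment y d n) \<in> Lset T \<omega>" for \<omega>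
      using Lset_eq_UNIV_if_weighted_increments[OF d \<open>\<And>n. c n \<noteq> 0\<close> c(2) that] .
  qed
qed

lemma closure_Hr:
  assumes "separable_type TYPE('a)"
  shows "closure (Hr T) = UNIV"
proof -
  obtain D :: "'a set" where D: "countable D" "closure D = UNIV"
    using assms by (auto simp: separable_type_def)
  then have "D \<noteq> {}" by auto
  then have d: "closure (range (from_nat_into D)) = UNIV" using D by (simp add: range_from_nat_into)
  have "y \<in> closure (Hr T)" for y
    unfolding closure_approachable
  proof (intro allI impI)
    fix \<epsilon> :: real assume "\<epsilon> > 0"
    then obtain x where "dist x y \<le> \<epsilon> / 2" "\<And>\<omega>. x \<in> Lset T \<omega> \<Longrightarrow> Lset T \<omega> = UNIV"
      using exists_near_Lset_universal_vector[OF d, of "\<epsilon> / 2" y] by auto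
    moreover from this(2) have "\<forall>\<omega>. x \<in> Lset T \<omega> \<longrightarrow> closure (Lset T \<omega>) = UNIV"
      by (metis closure_UNIV)
    then have "x \<in> Hr T" by (simp add: Hr_def Rec_eq_UNIV)
    ultimately show "\<exists>x\<in>Hr T. dist x y < \<epsilon>" using \<open>\<epsilon> > 0\<close> by force
  qed
  then show ?thesis by auto
qed

end

lemma complex_hilbert_Re_inner:
  assumes "complex_hilbert sc ip"
  shows "semi_inner_form (\<lambda>x y. Re (ip x y))" and "Re (ip x x) = (norm x)\<^sup>2"
proof -
  note H = assms[unfolded complex_hilbert_def]
  have real: "\<forall>r x. sc (complex_of_real r) x = r *\<^sub>R x" using H by (elim conjE) assumption
  have add: "\<forall>x y z. ip (x + y) z = ip x z + ip y z" using H by (elim conjE) assumption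
  have scale: "\<forall>a x y. ip (sc a x) y = a * ip x y" using H by (elim conjE) assumption
  have conj: "\<forall>x y. ip y x = cnj (ip x y)" using H by (elim conjE) assumption
  have nonneg: "\<forall>x. ip x x \<in> \<real> \<and> Re (ip x x) \<ge> 0" using H by (elim conjE) assumption
  have norm: "\<forall>x. norm x = sqrt (Re (ip x x))" using H by (elim conjE) assumption
  show "semi_inner_form (\<lambda>x y. Re (ip x y))"
  proof
    show "Re (ip (x + y) z) = Re (ip x z) + Re (ip y z)" for x y z
      using add[rule_format, of x y z] by simp
    show "Re (ip (r *\<^sub>R x) y) = r * Re (ip x y)" for r x y
      using scale[rule_format, of "complex_of_real r" x y] real[rule_format, of r x] by simp
    show "Re (ip x y) = Re (ip y x)" for x y using conj[rule_format, of x y] by simp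
    show "0 \<le> Re (ip x x)" for x using nonneg by simp
  qed
  show "Re (ip x x) = (norm x)\<^sup>2" using norm[rule_format, of x] nonneg[rule_format, of x] by simp
qed

lemma power_boundedE:
  assumes "bounded_linear T" "power_bounded T"
  obtains M where "1 \<le> M" "\<And>n x. norm ((T ^^ n) x) \<le> M * norm x"
proof -
  obtain M0 where M0: "\<And>n. onorm (T ^^ n) \<le> M0" using assms(2) by (auto simp: power_bounded_def)
  have "norm ((T ^^ n) x) \<le> max M0 1 * norm x" for n x
  proof -
    have "bounded_linear (T ^^ n)"
      by (induction n) (simp_all add: bounded_linear_ident[unfolded id_def]
          bounded_linear_compose[OF assms(1)])
    then have "norm ((T ^^ n) x) \<le> onorm (T ^^ n) * norm x" by (rule onorm)
    also have "\<dots> \<le> max M0 1 * norm x" using M0[of n] by (intro mult_right_mono) auto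
    finally show ?thesis .
  qed
  then show ?thesis by (intro that[of "max M0 1"]) auto
qed

theorem theorem5p2:
  fixes sc :: "complex \<Rightarrow> 'a::banach \<Rightarrow> 'a"
    and ip :: "'a \<Rightarrow> 'a \<Rightarrow> complex"
    and T :: "'a \<Rightarrow> 'a"
  assumes "complex_hilbert sc ip"
    and "separable_type TYPE('a)"
    and "complex_bounded_operator sc T"
    and "power_bounded T"
    and "recurrent T"
  shows "hyper_recurrent T \<and> closure (Hr T) = UNIV"
proof -
  have T: "bounded_linear T" using assms(3) by (simp add: complex_bounded_operator_def)
  obtain M where "1 \<le> M" "\<And>n x. norm ((T ^^ n) x) \<le> M * norm x"
    using power_boundedE[OF T assms(4)] by blast
  then interpret hilbert_power_bounded_recurrent T M "\<lambda>x y. Re (ip x y)"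
    using T assms(5) complex_hilbert_Re_inner[OF assms(1)]
    by (simp add: hilbert_power_bounded_recurrent_def hilbert_power_bounded_recurrent_axioms_def
        power_bounded_recurrent_def)
  have "closure (Hr T) = UNIV" using assms(2) by (rule closure_Hr)
  then show ?thesis using assms(5) by (auto simp: hyper_recurrent_def)
qed

end
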